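(* Let $L=\{a^nb^m : n,m\in\mathbb{N},\ m\le n\}\cup\{a^nb^mc : n,m\in\mathbb{N}\}$ over the alphabet $\{a,b,c\}$. Then $L\in \mathrm{CH}_1$ and $L\notin \mathrm{CD}$, i.e. $L$ is recognised by some history-deterministic $1$-VASS under coverability acceptance but by no deterministic $k$-VASS (for any $k$) under coverability acceptance.
   Context: Fix a finite alphabet $\Sigma$. A $k$-dimensional vector addition system with states ($k$-VASS) is a tuple $(Q,q_0,F,\delta)$ where $Q$ is a finite set of states, $q_0\in Q$ is initial, $F\subseteq Q$ is the set of accepting states, and $\delta\subseteq Q\times\Sigma\times\mathbb{Z}^k\times Q$ is a finite set of transitions (no $\varepsilon$-transitions). A run on a word $w=a_1\cdots a_n$ is a sequence of transitions $(p_{i-1},a_i,d_i,p_i)$ with $p_0=q_0$ such that the counter vectors $v_0=\vec 0$, $v_i=v_{i-1}+d_i$ all lie in $\mathbb{N}^k$. Under coverability acceptance the run is accepting if $p_n\in F$. The language is the set of words having an accepting run. A VASS is deterministic if for every state $q$ and letter $a$ there is at most one transition $(q,a,d,q')$. A VASS is history-deterministic if there is a resolver, i.e. a function $r$ mapping each finite sequence of transitions and each letter $a$ to a transition labelled $a$, such that for every word $w$ in the language, the sequence of transitions obtained by successively applying $r$ to the letters of $w$ is a run on $w$ (counters stay nonnegative) and is accepting. $\mathrm{CD}_k$ (resp. $\mathrm{CH}_k$) is the class of languages recognised by deterministic (resp. history-deterministic) $k$-VASS under coverability acceptance, and $\mathrm{CD}=\bigcup_{k\ge1}\mathrm{CD}_k$.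 *)

theory Defs
  imports Main
begin

datatype sym = a | b | c

type_synonym ('q, 's) trans = "'q \<times> 's \<times> int list \<times> 'q"

record ('q, 's) vass =
  states :: "'q set"
  init   :: 'q
  final  :: "'q set"
  delta  :: "('q, 's) trans set"

definition is_vass :: "nat \<Rightarrow> ('q, 's) vass \<Rightarrow> bool" where
  "is_vass k V \<longleftrightarrow> finite (states V) \<and> init V \<in> states V \<and> final V \<subseteq> states V
     \<and> finite (delta V)
     \<and> (\<forall>(p, x, d, p') \<in> delta V. p \<in> states V \<and> p' \<in> states V \<and> length d = k)"

definition counter :: "nat \<Rightarrow> ('q, 's) trans list \<Rightarrow> int list" where
  "counter k ts = foldl (\<lambda>v (p, x, d, p'). map2 (+) v d) (replicate k 0) ts"

definition is_run :: "nat \<Rightarrow> ('q, 's) vass \<Rightarrow> 's list \<Rightarrow> ('q, 's) trans list \<Rightarrow> bool" where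
  "is_run k V w ts \<longleftrightarrow> length ts = length w
     \<and> (\<forall>i < length ts. ts ! i \<in> delta V \<and> fst (snd (ts ! i)) = w ! i)
     \<and> (\<forall>i < length ts. fst (ts ! i) = (if i = 0 then init V else snd (snd (snd (ts ! (i - 1))))))
     \<and> (\<forall>i \<le> length ts. \<forall>x \<in> set (counter k (take i ts)). x \<ge> 0)"

definition last_state :: "('q, 's) vass \<Rightarrow> ('q, 's) trans list \<Rightarrow> 'q" where
  "last_state V ts = (if ts = [] then init V else snd (snd (snd (last ts))))"

definition accepting_run :: "nat \<Rightarrow> ('q, 's) vass \<Rightarrow> 's list \<Rightarrow> ('q, 's) trans list \<Rightarrow> bool" where
  "accepting_run k V w ts \<longleftrightarrow> is_run k V w ts \<and> last_state V ts \<in> final V"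

text \<open>Language under coverability acceptance.\<close>
definition lang :: "nat \<Rightarrow> ('q, 's) vass \<Rightarrow> 's list set" where
  "lang k V = {w. \<exists>ts. accepting_run k V w ts}"

definition deterministic :: "('q, 's) vass \<Rightarrow> bool" where
  "deterministic V \<longleftrightarrow> (\<forall>q x d1 q1 d2 q2. (q, x, d1, q1) \<in> delta V \<and> (q, x, d2, q2) \<in> delta V
      \<longrightarrow> d1 = d2 \<and> q1 = q2)"

fun resolve :: "(('q, 's) trans list \<Rightarrow> 's \<Rightarrow> ('q, 's) trans) \<Rightarrow> ('q, 's) trans list \<Rightarrow> 's list
                 \<Rightarrow> ('q, 's) trans list" where
  "resolve r acc [] = acc"
| "resolve r acc (x # xs) = resolve r (acc @ [r acc x]) xs"

definition is_resolver :: "nat \<Rightarrow> ('q, 's) vass \<Rightarrow> (('q, 's) trans list \<Rightarrow> 's \<Rightarrow> ('q, 's) trans) \<Rightarrow> bool" where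
  "is_resolver k V r \<longleftrightarrow>
     (\<forall>w \<in> lang k V. accepting_run k V w (resolve r [] w))"

definition history_deterministic :: "nat \<Rightarrow> ('q, 's) vass \<Rightarrow> bool" where
  "history_deterministic k V \<longleftrightarrow> (\<exists>r. is_resolver k V r)"

text \<open>Classes CD_k and CH_k. State sets are taken inside \<open>nat\<close> (w.l.o.g., any finite state set
  can be renamed injectively into \<open>nat\<close>).\<close>
definition CD :: "nat \<Rightarrow> sym list set set" where
  "CD k = {L. \<exists>V :: (nat, sym) vass. is_vass k V \<and> deterministic V \<and> lang k V = L}"

definition CH :: "nat \<Rightarrow> sym list set set" where
  "CH k = {L. \<exists>V :: (nat, sym) vass. is_vass k V \<and> history_deterministic k V \<and> lang k V = L}"

definition CD_all :: "sym list set set" where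
  "CD_all = (\<Union>k \<in> {k. k \<ge> 1}. CD k)"

definition L_ex :: "sym list set" where
  "L_ex = {replicate n a @ replicate m b | n m. m \<le> n}
        \<union> {replicate n a @ replicate m b @ [c] | n m. True}"

end

theory Submission
  imports Defs
begin

text \<open>
  Membership in CH 1: the 1-VASS V_ex counts the a's in state 0. On each b it either
  decrements in state 1 (accepting, so non-negativity of the counter enforces m \<le> n) or
  moves to the rejecting state 2 without touching the counter; a final c leads to the
  accepting state 3 from every state. The resolver decrements as long as the counter is
  positive: this never blocks a run, and a c is still accepted afterwards.

  Non-membership in CD: in a deterministic VASS the state reached on a word is a function
  of the word, so by pigeonhole some a^n and a^n' with n < n' reach the same state. Since
  a^n b^n' c is in L_ex, the word a^n b^n' has a run; it ends in the same state as the
  accepting run on a^n' b^n', and coverability acceptance only looks at that state, so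
  a^n b^n' would be accepted.
\<close>

lemma counter_Nil [simp]: "counter k [] = replicate k 0"
  by (simp add: counter_def)

lemma counter_snoc [simp]: "counter k (ts @ [(p, x, d, q)]) = map2 (+) (counter k ts) d"
  by (simp add: counter_def)

lemma last_state_Nil [simp]: "last_state V [] = init V"
  by (simp add: last_state_def)

lemma last_state_snoc [simp]: "last_state V (ts @ [(p, x, d, q)]) = q"
  by (simp add: last_state_def)

lemma is_run_Nil_iff [simp]: "is_run k V [] ts \<longleftrightarrow> ts = []"
  by (auto simp: is_run_def)

lemma last_state_take:
  "i \<le> length ts \<Longrightarrow>
   last_state V (take i ts) = (if i = 0 then init V else snd (snd (snd (ts ! (i - 1)))))"
  by (auto simp: last_state_def last_conv_nth min_def)

lemma is_run_iff:
  "is_run k V w ts \<longleftrightarrow> length ts = length w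
     \<and> (\<forall>i < length ts. ts ! i \<in> delta V \<and> fst (snd (ts ! i)) = w ! i
                        \<and> fst (ts ! i) = last_state V (take i ts))
     \<and> (\<forall>i \<le> length ts. \<forall>y \<in> set (counter k (take i ts)). 0 \<le> y)"
  unfolding is_run_def by (auto simp: last_state_take)

lemma All_le_Suc: "(\<forall>i \<le> Suc n. P i) \<longleftrightarrow> (\<forall>i \<le> n. P i) \<and> P (Suc n)"
  by (auto simp: le_Suc_eq)

lemma is_run_snoc:
  "is_run k V (w @ [x]) (ts @ [t]) \<longleftrightarrow>
     is_run k V w ts \<and> t \<in> delta V \<and> fst (snd t) = x \<and> fst t = last_state V ts
     \<and> (\<forall>y \<in> set (counter k (ts @ [t])). 0 \<le> y)"
proof (cases "length ts = length w")
  case True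
  then show ?thesis
    unfolding is_run_iff by (auto simp: All_less_Suc All_le_Suc nth_append)
next
  case False
  then show ?thesis by (simp add: is_run_def)
qed

lemma is_run_snocE:
  assumes "is_run k V (w @ [x]) ts"
  obtains ts' t where "ts = ts' @ [t]" "is_run k V w ts'" "t \<in> delta V" "fst (snd t) = x"
    "fst t = last_state V ts'"
proof -
  from assms have "length ts = Suc (length w)" by (simp add: is_run_def)
  then obtain ts' t where "ts = ts' @ [t]" by (metis length_Suc_conv_rev)
  with assms show ?thesis using that is_run_snoc by metis
qed

lemma is_run_snocD: "is_run k V (u @ [x]) ts \<Longrightarrow> \<exists>ts'. is_run k V u ts'"
  by (erule is_run_snocE) blast

lemma lang_has_run: "w \<in> lang k V \<Longrightarrow> \<exists>ts. is_run k V w ts"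
  unfolding lang_def accepting_run_def by blast

lemma is_run_counter_nonneg: "is_run k V w ts \<Longrightarrow> y \<in> set (counter k ts) \<Longrightarrow> 0 \<le> y"
  unfolding is_run_def by (metis order_refl take_all)

lemma run_invariant:
  assumes "is_run k V w ts"
    and "P (init V) [] (replicate k 0)"
    and "\<And>p w v x d q. P p w v \<Longrightarrow> (p, x, d, q) \<in> delta V \<Longrightarrow> P q (w @ [x]) (map2 (+) v d)"
  shows "P (last_state V ts) w (counter k ts)"
  using assms(1)
proof (induction w arbitrary: ts rule: rev_induct)
  case Nil
  then show ?case using assms(2) by simp
next
  case (snoc x w)
  then obtain ts' p d q where "ts = ts' @ [(p, x, d, q)]" "is_run k V w ts'" "(p, x, d, q) \<in> delta V"
    "p = last_state V ts'"
    by (elim is_run_snocE) auto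
  with snoc.IH show ?case using assms(3) by fastforce
qed

lemma last_state_in_states: "is_vass k V \<Longrightarrow> is_run k V w ts \<Longrightarrow> last_state V ts \<in> states V"
  by (rule run_invariant[where P = "\<lambda>p _ _. p \<in> states V"]) (auto simp: is_vass_def)

(* Only meaningful for deterministic V; otherwise THE returns an unspecified state. *)
definition det_step :: "('q, 's) vass \<Rightarrow> 'q \<Rightarrow> 's \<Rightarrow> 'q" where
  "det_step V q x = (THE q'. \<exists>d. (q, x, d, q') \<in> delta V)"

definition det_state :: "('q, 's) vass \<Rightarrow> 's list \<Rightarrow> 'q" where
  "det_state V w = foldl (det_step V) (init V) w"

lemma det_step_eq: "deterministic V \<Longrightarrow> (p, x, d, q) \<in> delta V \<Longrightarrow> det_step V p x = q"
  unfolding det_step_def deterministic_def by blast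

lemma last_state_deterministic:
  "deterministic V \<Longrightarrow> is_run k V w ts \<Longrightarrow> last_state V ts = det_state V w"
  by (rule run_invariant[where P = "\<lambda>p w _. p = det_state V w"]) (auto simp: det_state_def det_step_eq)

lemma deterministic_states_collide:
  fixes f :: "nat \<Rightarrow> 's list"
  assumes V: "is_vass k V" "deterministic V" and runs: "\<And>n. \<exists>ts. is_run k V (f n) ts"
  shows "\<exists>n n'. n < n' \<and> det_state V (f n) = det_state V (f n')"
proof -
  have "range (\<lambda>n. det_state V (f n)) \<subseteq> states V"
    using runs last_state_in_states[OF V(1)] last_state_deterministic[OF V(2)] by (metis image_subsetI)
  moreover have "finite (states V)"
    using V(1) by (simp add: is_vass_def)
  ultimately have "finite (range (\<lambda>n. det_state V (f n)))"
    by (rule finite_subset)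
  then have "\<not> inj (\<lambda>n. det_state V (f n))"
    using finite_imageD[of "\<lambda>n. det_state V (f n)" UNIV] by auto
  then obtain n n' where "n \<noteq> n'" "det_state V (f n) = det_state V (f n')"
    unfolding inj_def by blast
  then show ?thesis
    by (metis nat_neq_iff)
qed

lemma deterministic_accept_transfer:
  assumes det: "deterministic V" and same: "det_state V u = det_state V u'"
    and acc: "u @ v \<in> lang k V" and run: "is_run k V (u' @ v) ts"
  shows "u' @ v \<in> lang k V"
proof -
  from acc obtain ts0 where "is_run k V (u @ v) ts0" "last_state V ts0 \<in> final V"
    unfolding lang_def accepting_run_def by blast
  moreover have "det_state V (u @ v) = det_state V (u' @ v)"
    using same by (simp add: det_state_def)
  ultimately have "last_state V ts \<in> final V"
    using run last_state_deterministic[OF det] by metis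
  with run show ?thesis
    unfolding lang_def accepting_run_def by blast
qed

lemma count_list_replicate: "count_list (replicate n x) y = (if x = y then n else 0)"
  by (induction n) auto

lemma replicate_ab_eq_iff:
  "replicate n a @ replicate m b = replicate n' a @ replicate m' b \<longleftrightarrow> n = n' \<and> m = m'"
  by (metis count_list_append count_list_replicate sym.distinct(1) add_0 add_0_right)

lemma ab_in_L_ex_iff: "replicate n a @ replicate m b \<in> L_ex \<longleftrightarrow> m \<le> n"
proof -
  have "c \<notin> set (replicate n a @ replicate m b)" by simp
  then have "replicate n a @ replicate m b \<noteq> replicate n' a @ replicate m' b @ [c]" for n' m'
    by (metis Un_iff list.set_intros(1) set_append)
  then show ?thesis
    unfolding L_ex_def by (auto simp: replicate_ab_eq_iff)
qed

lemma a_in_L_ex: "replicate n a \<in> L_ex"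
  using ab_in_L_ex_iff[of n 0] by simp

lemma abc_in_L_ex: "replicate n a @ replicate m b @ [c] \<in> L_ex"
  unfolding L_ex_def by blast

lemma lang_neq_L_ex_if_deterministic:
  assumes V: "is_vass k V" "deterministic V"
  shows "lang k V \<noteq> L_ex"
proof
  assume L: "lang k V = L_ex"
  have "replicate n a \<in> lang k V" for n
    using L a_in_L_ex by simp
  then have "\<exists>ts. is_run k V (replicate n a) ts" for n
    by (rule lang_has_run)
  then obtain n n' where less: "n < n'" and same: "det_state V (replicate n a) = det_state V (replicate n' a)"
    using deterministic_states_collide[OF V, of "\<lambda>n. replicate n a"] by blast
  have "(replicate n a @ replicate n' b) @ [c] \<in> lang k V"
    using L abc_in_L_ex by simp
  then obtain ts where "is_run k V (replicate n a @ replicate n' b) ts"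
    by (metis lang_has_run is_run_snocD)
  moreover have "replicate n' a @ replicate n' b \<in> lang k V"
    using L ab_in_L_ex_iff by simp
  ultimately have "replicate n a @ replicate n' b \<in> lang k V"
    using deterministic_accept_transfer[OF V(2) same[symmetric]] by blast
  with L less show False
    using ab_in_L_ex_iff by simp
qed

definition V_ex :: "(nat, sym) vass" where
  "V_ex = \<lparr>states = {0, 1, 2, 3}, init = 0, final = {0, 1, 3},
     delta = {(0, a, [1], 0), (0, b, [-1], 1), (0, b, [0], 2), (0, c, [0], 3),
              (1, b, [-1], 1), (1, b, [0], 2), (1, c, [0], 3), (2, b, [0], 2), (2, c, [0], 3)}\<rparr>"

lemma V_ex_simps [simp]:
  "states V_ex = {0, 1, 2, 3}" "init V_ex = 0" "final V_ex = {0, 1, 3}"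
  "delta V_ex = {(0, a, [1], 0), (0, b, [-1], 1), (0, b, [0], 2), (0, c, [0], 3),
              (1, b, [-1], 1), (1, b, [0], 2), (1, c, [0], 3), (2, b, [0], 2), (2, c, [0], 3)}"
  by (simp_all add: V_ex_def)

lemma is_vass_V_ex: "is_vass 1 V_ex"
  by (simp add: is_vass_def)

definition V_ex_inv :: "nat \<Rightarrow> sym list \<Rightarrow> int list \<Rightarrow> bool" where
  "V_ex_inv q w v \<longleftrightarrow>
     (\<exists>n m. w = replicate n a @ replicate m b
        \<and> ((q = 0 \<and> m = 0 \<or> q = 1) \<and> v = [int n - int m] \<or> q = 2))
   \<or> (q = 3 \<and> (\<exists>n m. w = replicate n a @ replicate m b @ [c]))"

lemma V_ex_invI:
  "w = replicate n a @ replicate m b \<Longrightarrow>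
   (q = 0 \<and> m = 0 \<or> q = 1) \<and> v = [int n - int m] \<or> q = 2 \<Longrightarrow> V_ex_inv q w v"
  unfolding V_ex_inv_def by blast

lemma V_ex_inv_step:
  assumes "V_ex_inv p w v" "(p, x, d, q) \<in> delta V_ex"
  shows "V_ex_inv q (w @ [x]) (map2 (+) v d)"
proof -
  from assms(2) have "p \<noteq> 3" by auto
  with assms(1) obtain n m where w: "w = replicate n a @ replicate m b"
    and v: "(p = 0 \<and> m = 0 \<or> p = 1) \<and> v = [int n - int m] \<or> p = 2"
    unfolding V_ex_inv_def by blast
  from assms(2) consider "p = 0" "x = a" "d = [1]" "q = 0" | "p \<in> {0, 1}" "x = b" "d = [-1]" "q = 1"
    | "x = b" "d = [0]" "q = 2" | "x = c" "d = [0]" "q = 3"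
    by auto
  then show ?thesis
  proof cases
    case 1
    show ?thesis
      by (rule V_ex_invI[of _ "Suc n" 0]) (use w v 1 in \<open>auto simp: replicate_append_same\<close>)
  next
    case 2
    show ?thesis
      by (rule V_ex_invI[of _ n "Suc m"]) (use w v 2 in \<open>auto simp: replicate_append_same\<close>)
  next
    case 3
    show ?thesis
      by (rule V_ex_invI[of _ n "Suc m"]) (use w 3 in \<open>auto simp: replicate_append_same\<close>)
  next
    case 4
    with w show ?thesis
      unfolding V_ex_inv_def by auto
  qed
qed

lemma lang_V_ex_subset: "lang 1 V_ex \<subseteq> L_ex"
proof
  fix w
  assume "w \<in> lang 1 V_ex"
  then obtain ts where run: "is_run 1 V_ex w ts" and fin: "last_state V_ex ts \<in> final V_ex"
    unfolding lang_def accepting_run_def by blast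
  have "V_ex_inv (last_state V_ex ts) w (counter 1 ts)"
    using run
  proof (rule run_invariant)
    show "V_ex_inv (init V_ex) [] (replicate 1 0)"
      by (rule V_ex_invI[of _ 0 0]) simp_all
  qed (rule V_ex_inv_step)
  with fin is_run_counter_nonneg[OF run] show "w \<in> L_ex"
    unfolding V_ex_inv_def by (auto simp: ab_in_L_ex_iff a_in_L_ex abc_in_L_ex)
qed

lemma resolve_snoc: "resolve r ts (w @ [x]) = resolve r ts w @ [r (resolve r ts w) x]"
  by (induction w arbitrary: ts) auto

definition r_ex :: "(nat, sym) trans list \<Rightarrow> sym \<Rightarrow> (nat, sym) trans" where
  "r_ex ts x = (let q = last_state V_ex ts in
     case x of
       a \<Rightarrow> (0, a, [1], 0)
     | b \<Rightarrow> if q \<noteq> 2 \<and> hd (counter 1 ts) > 0 then (q, b, [-1], 1) else (q, b, [0], 2)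
     | c \<Rightarrow> (q, c, [0], 3))"

lemma r_ex_simps:
  "r_ex ts a = (0, a, [1], 0)"
  "r_ex ts b = (if last_state V_ex ts \<noteq> 2 \<and> hd (counter 1 ts) > 0
     then (last_state V_ex ts, b, [-1], 1) else (last_state V_ex ts, b, [0], 2))"
  "r_ex ts c = (last_state V_ex ts, c, [0], 3)"
  by (simp_all add: r_ex_def)

lemma r_ex_run_a:
  "is_run 1 V_ex (replicate n a) (resolve r_ex [] (replicate n a))
   \<and> last_state V_ex (resolve r_ex [] (replicate n a)) = 0
   \<and> counter 1 (resolve r_ex [] (replicate n a)) = [int n]"
proof (induction n)
  case 0
  then show ?case by simp
next
  case (Suc n)
  have "replicate (Suc n) a = replicate n a @ [a]"
    by (simp add: replicate_append_same)
  with Suc show ?case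
    by (simp add: resolve_snoc is_run_snoc r_ex_simps)
qed

(* The truncated n - m is right: once the b's outnumber the a's the run sits in state 2
   with counter 0. *)
lemma r_ex_run_ab:
  "is_run 1 V_ex (replicate n a @ replicate m b) (resolve r_ex [] (replicate n a @ replicate m b))
   \<and> last_state V_ex (resolve r_ex [] (replicate n a @ replicate m b))
       = (if m = 0 then 0 else if m \<le> n then 1 else 2)
   \<and> counter 1 (resolve r_ex [] (replicate n a @ replicate m b)) = [int (n - m)]"
proof (induction m)
  case 0
  then show ?case using r_ex_run_a by simp
next
  case (Suc m)
  have word: "replicate n a @ replicate (Suc m) b = (replicate n a @ replicate m b) @ [b]"
    by (simp add: replicate_append_same)
  show ?case
    unfolding word resolve_snoc using Suc by (auto simp: is_run_snoc r_ex_simps simp del: append_assoc)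
qed

lemma r_ex_run_abc:
  "is_run 1 V_ex (replicate n a @ replicate m b @ [c]) (resolve r_ex [] (replicate n a @ replicate m b @ [c]))
   \<and> last_state V_ex (resolve r_ex [] (replicate n a @ replicate m b @ [c])) = 3"
  using r_ex_run_ab[of n m]
  unfolding append_assoc[symmetric] resolve_snoc
  by (simp add: is_run_snoc r_ex_simps del: append_assoc)

lemma r_ex_accepting: "w \<in> L_ex \<Longrightarrow> accepting_run 1 V_ex w (resolve r_ex [] w)"
  unfolding L_ex_def accepting_run_def using r_ex_run_ab r_ex_run_abc by fastforce

lemma lang_V_ex: "lang 1 V_ex = L_ex"
  using lang_V_ex_subset r_ex_accepting unfolding lang_def by blast

lemma is_resolver_r_ex: "is_resolver 1 V_ex r_ex"
  unfolding is_resolver_def lang_V_ex by (blast intro: r_ex_accepting)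

theorem mainTheorem2:
  shows "L_ex \<in> CH 1 \<and> L_ex \<notin> CD_all"
proof
  show "L_ex \<in> CH 1"
    unfolding CH_def history_deterministic_def using is_vass_V_ex is_resolver_r_ex lang_V_ex by blast
  show "L_ex \<notin> CD_all"
    unfolding CD_all_def CD_def using lang_neq_L_ex_if_deterministic by blast
qed

end
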